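(* Let $(\mathbb E;B,Q;M)$ be a metric double vector bundle with core $Q^*$, and let $D\subseteq\mathbb E$ be a double vector subbundle with sides $B'\subseteq B$, $U\subseteq Q$ and core $K\subseteq Q^*$. Let $\Sigma\colon B\times_MQ\to\mathbb E$ be a linear splitting adapted to $D$, i.e. $\Sigma(B'\times_MU)\subseteq D$, and let $\Lambda$ be the symmetric form defined by $\Sigma$. Then the double subbundle $D\to B'$ is isotropic if and only if $K\subseteq U^\circ$ and $\Lambda(u_1,u_2)\in(B')^\circ$ for all $m\in M$ and $u_1,u_2\in U_m$.
   Context: A double vector bundle $(\mathbb E;B,Q;M)$ with core $Q^*$: $\mathbb E$ carries vector bundle structures over $B$ and over $Q$ (with $B,Q\to M$) which commute; the core is the intersection of the kernels of the two projections, a vector bundle over $M$. A linear splitting $\Sigma\colon B\times_MQ\to\mathbb E$ is a double vector bundle embedding inducing the identity on $B$ and $Q$; it yields an identification $\mathbb E\cong B\times_MQ\times_MQ^*$ (with $(b,q,\tau)+_B(b,q',\tau')=(b,q+q',\tau+\tau')$ and $(b,q,\tau)+_Q(b',q,\tau')=(b+b',q,\tau+\tau')$), horizontal lifts $\sigma_Q(q)(b_m)=\Sigma(b_m,q(m))$ and core sections $\tau^\dagger(b_m)=(b_m,0,\tau(m))$ of $\mathbb E\to B$. The double vector bundle is metric if $\mathbb E\to B$ carries a symmetric fibrewise nondegenerate pairing with $\langle\tau_1^\dagger,\tau_2^\dagger\rangle=0$, $\langle\chi,\tau^\dagger\rangle=q_B^*\langle q,\tau\rangle$ for any linear section $\chi$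 over $q\in\Gamma(Q)$, and $\langle\chi_1,\chi_2\rangle$ fibrewise linear on $B$ for linear sections. The form $\Lambda$, a symmetric bilinear bundle map $Q\times_MQ\to B^*$, is defined by $\langle\sigma_Q(q_1),\sigma_Q(q_2)\rangle=\ell_{\Lambda(q_1,q_2)}$, where $\ell_\beta\colon B\to\mathbb R$ is the linear function of $\beta\in\Gamma(B^* )$; equivalently $\langle(b,q_1,\tau_1),(b,q_2,\tau_2)\rangle=\langle\Lambda(q_1,q_2),b\rangle+\langle q_1,\tau_2\rangle+\langle q_2,\tau_1\rangle$. A double vector subbundle with sides $B',U$ and core $K$ adapted to $\Sigma$ corresponds to $B'\times_MU\times_MK$. $D\to B'$ is isotropic if $\langle d_1,d_2\rangle=0$ for $d_1,d_2\in D$ in the same fibre over $B'$. $U^\circ\subseteq Q^*$ and $(B')^\circ\subseteq B^*$ are annihilators. *)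

theory Defs
  imports "HOL-Analysis.Analysis"
begin

text \<open>Fibrewise model of a double vector bundle decomposed by a linear splitting.
  Fibres of B and Q over a point m are finite-dimensional subspaces B m, Q m of
  real vector spaces; the fibre of the dual bundle is the space of linear
  functionals on the fibre (extended by 0 outside, to make them unique).\<close>

definition fib_lin :: "'a::real_vector set \<Rightarrow> ('a \<Rightarrow> real) \<Rightarrow> bool" where
  "fib_lin S f \<longleftrightarrow> (\<forall>x\<in>S. \<forall>y\<in>S. f (x + y) = f x + f y) \<and> (\<forall>x\<in>S. \<forall>c. f (c *\<^sub>R x) = c * f x)"

definition dual_fibre :: "'a::real_vector set \<Rightarrow> ('a \<Rightarrow> real) set" where
  "dual_fibre S = {f. fib_lin S f \<and> (\<forall>x. x \<notin> S \<longrightarrow> f x = 0)}"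

definition fd_subspace :: "'a::real_vector set \<Rightarrow> bool" where
  "fd_subspace S \<longleftrightarrow> subspace S \<and> (\<exists>T. finite T \<and> span T = S)"

definition dual_subspace :: "'a::real_vector set \<Rightarrow> ('a \<Rightarrow> real) set \<Rightarrow> bool" where
  "dual_subspace S K \<longleftrightarrow> K \<subseteq> dual_fibre S \<and> (\<lambda>_. 0) \<in> K \<and>
     (\<forall>f\<in>K. \<forall>g\<in>K. (\<lambda>x. f x + g x) \<in> K) \<and> (\<forall>f\<in>K. \<forall>c. (\<lambda>x. c * f x) \<in> K)"

definition annihilator :: "'a::real_vector set \<Rightarrow> 'a set \<Rightarrow> ('a \<Rightarrow> real) set" where
  "annihilator S W = {f \<in> dual_fibre S. \<forall>w\<in>W. f w = 0}"

text \<open>Fibre over m of the double vector bundle E = B x_M Q x_M Q^* (via the splitting).\<close>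
definition dvb_fibre :: "('m \<Rightarrow> 'b::real_vector set) \<Rightarrow> ('m \<Rightarrow> 'q::real_vector set) \<Rightarrow> 'm
    \<Rightarrow> ('b \<times> 'q \<times> ('q \<Rightarrow> real)) set" where
  "dvb_fibre B Q m = {(b, q, t). b \<in> B m \<and> q \<in> Q m \<and> t \<in> dual_fibre (Q m)}"

text \<open>Double vector subbundle with sides B', U and core K adapted to the splitting:
  B' x_M U x_M K.\<close>
definition sub_dvb_fibre :: "('m \<Rightarrow> 'b::real_vector set) \<Rightarrow> ('m \<Rightarrow> 'q::real_vector set)
    \<Rightarrow> ('m \<Rightarrow> ('q \<Rightarrow> real) set) \<Rightarrow> 'm \<Rightarrow> ('b \<times> 'q \<times> ('q \<Rightarrow> real)) set" where
  "sub_dvb_fibre B' U K m = {(b, u, k). b \<in> B' m \<and> u \<in> U m \<and> k \<in> K m}"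

text \<open>D \<rightarrow> B' is isotropic: elements of D in the same fibre over B' pair to zero.
  The first component of a triple is its base point in B.\<close>
definition isotropic_over_side ::
  "('m \<Rightarrow> ('b \<times> 'q \<times> ('q \<Rightarrow> real)) \<Rightarrow> ('b \<times> 'q \<times> ('q \<Rightarrow> real)) \<Rightarrow> real)
   \<Rightarrow> ('m \<Rightarrow> ('b \<times> 'q \<times> ('q \<Rightarrow> real)) set) \<Rightarrow> bool" where
  "isotropic_over_side g D \<longleftrightarrow>
     (\<forall>m. \<forall>d1\<in>D m. \<forall>d2\<in>D m. fst d1 = fst d2 \<longrightarrow> g m d1 d2 = 0)"

end

theory Submission
  imports Defs
begin

text \<open>Under the splitting, the pairing of two elements of D over the same b in B' is
  \<open>\<Lambda> u1 u2 b + k2 u1 + k1 u2\<close>. Isotropy makes all of these vanish; taking the core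
  components zero isolates \<open>\<Lambda> u1 u2 b\<close>, and taking b = 0, u2 = 0, k1 = 0 isolates
  \<open>k2 u1\<close>. Conversely, if both kinds of terms vanish, so does every pairing.\<close>

lemma dual_fibre_zero:
  assumes "f \<in> dual_fibre S"
  shows "f 0 = 0"
proof (cases "0 \<in> S")
  case True
  then have "f ((0::real) *\<^sub>R 0) = 0 * f 0"
    using assms unfolding dual_fibre_def fib_lin_def by blast
  then show ?thesis by simp
next
  case False
  then show ?thesis using assms unfolding dual_fibre_def by blast
qed

lemma isotropic_over_side_sub_dvb_fibre_iff:
  "isotropic_over_side g (sub_dvb_fibre B' U K) \<longleftrightarrow>
     (\<forall>m. \<forall>b\<in>B' m. \<forall>u1\<in>U m. \<forall>u2\<in>U m. \<forall>k1\<in>K m. \<forall>k2\<in>K m.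
        g m (b, u1, k1) (b, u2, k2) = 0)"
  unfolding isotropic_over_side_def sub_dvb_fibre_def by fastforce

lemma split_pairing_vanishes_iff:
  fixes L :: "'q::zero \<Rightarrow> 'q \<Rightarrow> 'b::zero \<Rightarrow> real" and K :: "('q \<Rightarrow> real) set"
  assumes "0 \<in> B'" and "0 \<in> U" and "(\<lambda>_. 0) \<in> K"
    and L_zero: "\<And>u. u \<in> U \<Longrightarrow> L u 0 0 = 0"
  shows "(\<forall>b\<in>B'. \<forall>u1\<in>U. \<forall>u2\<in>U. \<forall>k1\<in>K. \<forall>k2\<in>K. L u1 u2 b + k2 u1 + k1 u2 = 0) \<longleftrightarrow>
         (\<forall>k\<in>K. \<forall>u\<in>U. k u = 0) \<and> (\<forall>b\<in>B'. \<forall>u1\<in>U. \<forall>u2\<in>U. L u1 u2 b = 0)"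
    (is "?pairing \<longleftrightarrow> ?core \<and> ?form")
proof
  assume pairing: ?pairing
  have ?core
  proof (intro ballI)
    fix k u assume "k \<in> K" "u \<in> U"
    then have "L u 0 0 + k u + 0 = 0"
      using pairing assms(1-3) by fastforce
    then show "k u = 0" using L_zero \<open>u \<in> U\<close> by simp
  qed
  moreover have ?form
    using pairing assms(3) by fastforce
  ultimately show "?core \<and> ?form" ..
next
  assume core_form: "?core \<and> ?form"
  show ?pairing
  proof (intro ballI)
    fix b u1 u2 k1 k2 assume "b \<in> B'" "u1 \<in> U" "u2 \<in> U" "k1 \<in> K" "k2 \<in> K"
    with core_form have "L u1 u2 b = 0" "k2 u1 = 0" "k1 u2 = 0" by blast+
    then show "L u1 u2 b + k2 u1 + k1 u2 = 0" by simp
  qed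
qed

theorem proposition5p1:
  fixes B B' :: "'m \<Rightarrow> 'b::real_vector set"
    and Q U :: "'m \<Rightarrow> 'q::real_vector set"
    and K :: "'m \<Rightarrow> ('q \<Rightarrow> real) set"
    and \<Lambda> :: "'m \<Rightarrow> 'q \<Rightarrow> 'q \<Rightarrow> 'b \<Rightarrow> real"
    and g :: "'m \<Rightarrow> ('b \<times> 'q \<times> ('q \<Rightarrow> real)) \<Rightarrow> ('b \<times> 'q \<times> ('q \<Rightarrow> real)) \<Rightarrow> real"
  assumes B: "\<And>m. fd_subspace (B m)"
    and Q: "\<And>m. fd_subspace (Q m)"
    and B'sub: "\<And>m. subspace (B' m) \<and> B' m \<subseteq> B m"
    and Usub: "\<And>m. subspace (U m) \<and> U m \<subseteq> Q m"
    and Ksub: "\<And>m. dual_subspace (Q m) (K m)"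
    and Lambda_dual: "\<And>m q1 q2. q1 \<in> Q m \<Longrightarrow> q2 \<in> Q m \<Longrightarrow> \<Lambda> m q1 q2 \<in> dual_fibre (B m)"
    and Lambda_sym: "\<And>m q1 q2. q1 \<in> Q m \<Longrightarrow> q2 \<in> Q m \<Longrightarrow> \<Lambda> m q1 q2 = \<Lambda> m q2 q1"
    and Lambda_lin: "\<And>m q2 b. q2 \<in> Q m \<Longrightarrow> fib_lin (Q m) (\<lambda>q1. \<Lambda> m q1 q2 b)"
    and metric: "\<And>m b q1 q2 t1 t2. (b, q1, t1) \<in> dvb_fibre B Q m \<Longrightarrow> (b, q2, t2) \<in> dvb_fibre B Q m \<Longrightarrow>
        g m (b, q1, t1) (b, q2, t2) = \<Lambda> m q1 q2 b + t2 q1 + t1 q2"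
  shows "isotropic_over_side g (sub_dvb_fibre B' U K) \<longleftrightarrow>
         (\<forall>m. K m \<subseteq> annihilator (Q m) (U m)) \<and>
         (\<forall>m. \<forall>u1\<in>U m. \<forall>u2\<in>U m. \<Lambda> m u1 u2 \<in> annihilator (B m) (B' m))"
proof -
  have K_dual: "K m \<subseteq> dual_fibre (Q m)" and zero_in_K: "(\<lambda>_. 0) \<in> K m" for m
    using Ksub[of m] unfolding dual_subspace_def by blast+
  have zero_in_sides: "0 \<in> B' m" "0 \<in> U m" for m
    using B'sub[of m] Usub[of m] by (simp_all add: subspace_0)
  have pairing: "g m (b, u1, k1) (b, u2, k2) = \<Lambda> m u1 u2 b + k2 u1 + k1 u2"
    if "b \<in> B' m" "u1 \<in> U m" "u2 \<in> U m" "k1 \<in> K m" "k2 \<in> K m" for m b u1 u2 k1 k2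
    using that B'sub[of m] Usub[of m] K_dual[of m] by (intro metric) (auto simp: dvb_fibre_def)
  have \<Lambda>_zero: "\<Lambda> m u 0 0 = 0" if "u \<in> U m" for m u
    using that Usub[of m] zero_in_sides(2)[of m] by (blast intro: dual_fibre_zero Lambda_dual)
  have "isotropic_over_side g (sub_dvb_fibre B' U K) \<longleftrightarrow>
     (\<forall>m. \<forall>b\<in>B' m. \<forall>u1\<in>U m. \<forall>u2\<in>U m. \<forall>k1\<in>K m. \<forall>k2\<in>K m. \<Lambda> m u1 u2 b + k2 u1 + k1 u2 = 0)"
    by (simp add: isotropic_over_side_sub_dvb_fibre_iff pairing cong: ball_cong)
  also have "\<dots> \<longleftrightarrow> (\<forall>m. (\<forall>k\<in>K m. \<forall>u\<in>U m. k u = 0) \<and>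
                         (\<forall>b\<in>B' m. \<forall>u1\<in>U m. \<forall>u2\<in>U m. \<Lambda> m u1 u2 b = 0))"
    using split_pairing_vanishes_iff[OF zero_in_sides zero_in_K, of _ "\<Lambda> _"] \<Lambda>_zero by presburger
  also have "\<dots> \<longleftrightarrow> (\<forall>m. K m \<subseteq> annihilator (Q m) (U m)) \<and>
         (\<forall>m. \<forall>u1\<in>U m. \<forall>u2\<in>U m. \<Lambda> m u1 u2 \<in> annihilator (B m) (B' m))"
    using K_dual Lambda_dual Usub unfolding annihilator_def by blast
  finally show ?thesis .
qed

end
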